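(* For integers $m\ge1$, $n\ge1$, let $\Delta_{m,n}$ be the subgraph of the integer lattice graph $\mathbb{Z}^m$ induced by $\{x\in\mathbb{Z}^m: 0\le x_1\le\cdots\le x_m\le n\}$. Then the map $\phi:I_m^{(n)}\to\Delta_{m,n}$, $\phi(\mathbf{x})=(\phi_1(\mathbf{x}),\dots,\phi_m(\mathbf{x}))$ with $\phi_k(\mathbf{x})=\sum_{i=m-k+1}^m\mathbf{x}(i)$, is a graph isomorphism. Consequently $I_m^{(n)}\cong F_m(I_{n+m-1})$.
   Context: $I_m$ is the path graph on vertices $\{0,1,\dots,m\}$ with $i\sim i+1$. $\mathbb{Z}^m$ is the graph on integer points with $x\sim y$ iff $\sum_i|x_i-y_i|=1$. $I_m^{(n)}$ is the $n$th reduced power of $I_m$: vertices are degree-$n$ monomials $\mathbf{x}$ in the vertices of $I_m$, with $\mathbf{x}(i)$ the multiplicity of vertex $i$, two monomials adjacent iff they differ by moving one token along one edge. $F_m(H)$ is the $m$-token graph of $H$: vertices are $m$-element subsets of $V(H)$, adjacent iff their symmetric difference is $\{u,v\}$ for an edge $uv$ of $H$. *)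

theory Defs
  imports Main
begin

definition graph_iso ::
  "'a set \<Rightarrow> ('a \<Rightarrow> 'a \<Rightarrow> bool) \<Rightarrow> 'b set \<Rightarrow> ('b \<Rightarrow> 'b \<Rightarrow> bool) \<Rightarrow> ('a \<Rightarrow> 'b) \<Rightarrow> bool" where
  "graph_iso V E W F f \<longleftrightarrow> bij_betw f V W \<and> (\<forall>x\<in>V. \<forall>y\<in>V. E x y \<longleftrightarrow> F (f x) (f y))"

definition path_V :: "nat \<Rightarrow> nat set" where
  "path_V m = {0..m}"

definition path_E :: "nat \<Rightarrow> nat \<Rightarrow> bool" where
  "path_E i j \<longleftrightarrow> i + 1 = j \<or> j + 1 = i"

text \<open>n-th reduced power of a graph (V,E): degree-n monomials in the vertices,
  represented by their multiplicity functions (zero outside V); adjacent iff one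
  is obtained from the other by moving one token along one edge.\<close>
definition rpow_V :: "'a set \<Rightarrow> nat \<Rightarrow> ('a \<Rightarrow> nat) set" where
  "rpow_V V n = {x. (\<forall>v. v \<notin> V \<longrightarrow> x v = 0) \<and> (\<Sum>v\<in>V. x v) = n}"

definition rpow_E :: "'a set \<Rightarrow> ('a \<Rightarrow> 'a \<Rightarrow> bool) \<Rightarrow> ('a \<Rightarrow> nat) \<Rightarrow> ('a \<Rightarrow> nat) \<Rightarrow> bool" where
  "rpow_E V E x y \<longleftrightarrow>
     (\<exists>u\<in>V. \<exists>v\<in>V. E u v \<and> x u \<ge> 1 \<and> y = x(u := x u - 1, v := x v + 1))"

definition token_V :: "'a set \<Rightarrow> nat \<Rightarrow> 'a set set" where
  "token_V V k = {A. A \<subseteq> V \<and> card A = k}"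

definition token_E :: "('a \<Rightarrow> 'a \<Rightarrow> bool) \<Rightarrow> 'a set \<Rightarrow> 'a set \<Rightarrow> bool" where
  "token_E E A B \<longleftrightarrow> (\<exists>u v. E u v \<and> (A - B) \<union> (B - A) = {u, v})"

definition Zm_V :: "nat \<Rightarrow> (nat \<Rightarrow> int) set" where
  "Zm_V m = {x. \<forall>i. i \<notin> {1..m} \<longrightarrow> x i = 0}"

definition Zm_E :: "nat \<Rightarrow> (nat \<Rightarrow> int) \<Rightarrow> (nat \<Rightarrow> int) \<Rightarrow> bool" where
  "Zm_E m x y \<longleftrightarrow> (\<Sum>i\<in>{1..m}. \<bar>x i - y i\<bar>) = 1"

text \<open>Vertex set of Delta_{m,n}; it is an induced subgraph of Z^m, so its adjacency is Zm_E m.\<close>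
definition Delta_V :: "nat \<Rightarrow> nat \<Rightarrow> (nat \<Rightarrow> int) set" where
  "Delta_V m n = {x \<in> Zm_V m. 0 \<le> x 1 \<and> (\<forall>i. 1 \<le> i \<and> i < m \<longrightarrow> x i \<le> x (i + 1)) \<and> x m \<le> int n}"

definition phi :: "nat \<Rightarrow> (nat \<Rightarrow> nat) \<Rightarrow> (nat \<Rightarrow> int)" where
  "phi m x = (\<lambda>k. if k \<in> {1..m} then int (\<Sum>i\<in>{m - k + 1..m}. x i) else 0)"

end

theory Submission
  imports Defs
begin

text \<open>
  Each of the three graphs is the symmetric closure of an elementary up-step: in the reduced
  power a token moves from vertex u to u + 1; in Delta(m,n) one coordinate grows by one; in the
  token graph a token moves to a free vertex u + 1. So it suffices to give bijections carrying
  up-steps exactly to up-steps. The suffix sums phi do this, since moving a token from u to u + 1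
  raises exactly phi(m - u). Putting the k-th of m distinct tokens at y(k) + k - 1 turns a chain
  0 \<le> y(1) \<le> ... \<le> y(m) \<le> n into an m-subset of {0..n+m-1}, and raising y(k) moves the k-th
  token one step up.
\<close>

lemma graph_iso_of_steps:
  assumes "bij_betw f V W"
    and E: "\<And>x y. x \<in> V \<Longrightarrow> y \<in> V \<Longrightarrow> E x y \<longleftrightarrow> U x y \<or> U y x"
    and F: "\<And>x y. x \<in> W \<Longrightarrow> y \<in> W \<Longrightarrow> F x y \<longleftrightarrow> U' x y \<or> U' y x"
    and U: "\<And>x y. x \<in> V \<Longrightarrow> y \<in> V \<Longrightarrow> U x y \<longleftrightarrow> U' (f x) (f y)"
  shows "graph_iso V E W F f"
  unfolding graph_iso_def
proof (intro conjI ballI)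
  fix x y assume "x \<in> V" "y \<in> V"
  moreover have "f x \<in> W" "f y \<in> W" using assms(1) \<open>x \<in> V\<close> \<open>y \<in> V\<close> by (auto dest: bij_betw_apply)
  ultimately show "E x y \<longleftrightarrow> F (f x) (f y)" using E F U by simp
qed (fact assms(1))

lemma graph_iso_comp:
  assumes "graph_iso V E W F f" "graph_iso W F X G h"
  shows "graph_iso V E X G (h \<circ> f)"
proof -
  have "f x \<in> W" if "x \<in> V" for x
    using assms(1) that unfolding graph_iso_def by (auto dest: bij_betw_apply)
  then show ?thesis using assms unfolding graph_iso_def by (auto intro: bij_betw_trans)
qed

definition unit_step :: "nat \<Rightarrow> (nat \<Rightarrow> int) \<Rightarrow> (nat \<Rightarrow> int) \<Rightarrow> bool" where
  "unit_step m a b \<longleftrightarrow> (\<exists>k\<in>{1..m}. b = a(k := a k + 1))"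

lemma sum_abs_eq_1_int:
  fixes d :: "'a \<Rightarrow> int"
  assumes "finite A" "(\<Sum>i\<in>A. \<bar>d i\<bar>) = 1"
  obtains k where "k \<in> A" "\<bar>d k\<bar> = 1" "\<And>i. i \<in> A - {k} \<Longrightarrow> d i = 0"
proof -
  obtain k where k: "k \<in> A" "d k \<noteq> 0"
    using assms(2) by (metis abs_0 sum.neutral zero_neq_one)
  have "(\<Sum>i\<in>A. \<bar>d i\<bar>) = \<bar>d k\<bar> + (\<Sum>i\<in>A - {k}. \<bar>d i\<bar>)"
    using assms(1) k(1) by (simp add: sum.remove)
  moreover have "(\<Sum>i\<in>A - {k}. \<bar>d i\<bar>) \<ge> 0" by (simp add: sum_nonneg)
  ultimately have "\<bar>d k\<bar> = 1" "(\<Sum>i\<in>A - {k}. \<bar>d i\<bar>) = 0"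
    using k(2) assms(2) by linarith+
  with assms(1) k(1) show ?thesis by (intro that) (auto simp: sum_nonneg_eq_0_iff)
qed

lemma Zm_E_iff_unit_step:
  assumes "a \<in> Zm_V m" "b \<in> Zm_V m"
  shows "Zm_E m a b \<longleftrightarrow> unit_step m a b \<or> unit_step m b a"
proof
  assume "Zm_E m a b"
  then obtain k where k: "k \<in> {1..m}" "\<bar>a k - b k\<bar> = 1"
    and same: "\<And>i. i \<in> {1..m} - {k} \<Longrightarrow> a i - b i = 0"
    using sum_abs_eq_1_int[of "{1..m}" "\<lambda>i. a i - b i"] by (auto simp: Zm_E_def)
  have "a i = b i" if "i \<noteq> k" for i
    using same[of i] assms that by (cases "i \<in> {1..m}") (auto simp: Zm_V_def)
  then have "b = a(k := a k + 1) \<or> a = b(k := b k + 1)"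
    using k(2) by (auto simp: abs_eq_iff fun_eq_iff)
  then show "unit_step m a b \<or> unit_step m b a"
    using k(1) unfolding unit_step_def by blast
next
  have step: "Zm_E m c (c(k := c k + 1))" if "k \<in> {1..m}" for c k
  proof -
    have "(\<Sum>i\<in>{1..m}. \<bar>c i - (c(k := c k + 1)) i\<bar>) = (\<Sum>i\<in>{1..m}. if i = k then 1 else 0)"
      by (intro sum.cong) auto
    then show ?thesis using that by (simp add: Zm_E_def)
  qed
  assume "unit_step m a b \<or> unit_step m b a"
  then show "Zm_E m a b"
    using step by (auto simp: unit_step_def Zm_E_def abs_minus_commute)
qed

definition token_shift :: "nat set \<Rightarrow> nat set \<Rightarrow> bool" where
  "token_shift A B \<longleftrightarrow> (\<exists>u\<in>A. Suc u \<notin> A \<and> B = insert (Suc u) (A - {u}))"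

lemma token_E_path_iff_token_shift:
  assumes "finite A" "finite B" "card A = card B"
  shows "token_E path_E A B \<longleftrightarrow> token_shift A B \<or> token_shift B A"
proof
  assume "token_E path_E A B"
  then obtain u v where uv: "path_E u v" "(A - B) \<union> (B - A) = {u, v}"
    unfolding token_E_def by blast
  have "u \<noteq> v" using uv(1) by (auto simp: path_E_def)
  moreover have "card ((A - B) \<union> (B - A)) = card (A - B) + card (B - A)"
    using assms(1,2) by (intro card_Un_disjoint) auto
  moreover have "card (A - B) = card (B - A)"
    using assms card_Diff_subset_Int[of A B] card_Diff_subset_Int[of B A] by (simp add: Int_commute)
  ultimately have "card (A - B) = 1" "card (B - A) = 1" using uv(2) by simp_all
  then obtain p q where p: "A - B = {p}" and q: "B - A = {q}"
    by (meson card_1_singletonE)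
  have "{p, q} = {u, v}" using uv(2) p q by (simp add: insert_commute)
  then have "path_E p q" using uv(1) by (auto simp: doubleton_eq_iff path_E_def)
  moreover have "B = insert q (A - {p})" "A = insert p (B - {q})" "p \<in> A" "q \<in> B" "q \<notin> A" "p \<notin> B"
    using p q by blast+
  ultimately show "token_shift A B \<or> token_shift B A"
    unfolding token_shift_def path_E_def by auto
next
  assume "token_shift A B \<or> token_shift B A"
  then show "token_E path_E A B"
    unfolding token_shift_def token_E_def path_E_def by (elim disjE bexE conjE) auto
qed

text \<open>Points of \<open>Zm_V m\<close> vanish at 0, so the chain starts with \<open>y 0 = 0\<close>.\<close>

lemma Delta_V_iff:
  "y \<in> Delta_V m n \<longleftrightarrow> y \<in> Zm_V m \<and> (\<forall>k<m. y k \<le> y (Suc k)) \<and> y m \<le> int n"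
proof -
  have "(0 \<le> y 1 \<and> (\<forall>i. 1 \<le> i \<and> i < m \<longrightarrow> y i \<le> y (i + 1))) \<longleftrightarrow> (\<forall>k<m. y k \<le> y (Suc k))"
    if "y \<in> Zm_V m"
  proof -
    have y0: "y 0 = 0" and "m = 0 \<Longrightarrow> y 1 = 0" using that by (auto simp: Zm_V_def)
    moreover have "y k \<le> y (Suc k)" if "0 \<le> y 1" "\<forall>i. 1 \<le> i \<and> i < m \<longrightarrow> y i \<le> y (i + 1)" "k < m" for k
      using that y0 by (cases k) auto
    ultimately show ?thesis by (cases m) auto
  qed
  then show ?thesis unfolding Delta_V_def by blast
qed

lemma Delta_V_mono:
  assumes "y \<in> Delta_V m n" "i \<le> j" "j \<le> m"
  shows "y i \<le> y j"
  using assms(2,3)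
proof (induction j)
  case (Suc j)
  show ?case
  proof (cases "i = Suc j")
    case False
    then have "y i \<le> y j" using Suc by simp
    also have "y j \<le> y (Suc j)" using assms(1) Suc.prems(2) by (simp add: Delta_V_iff)
    finally show ?thesis .
  qed simp
qed simp

lemma Delta_V_bounds:
  assumes "y \<in> Delta_V m n" "k \<le> m"
  shows "0 \<le> y k" "y k \<le> int n"
proof -
  have "y 0 = 0" "y m \<le> int n" using assms(1) by (auto simp: Delta_V_def Zm_V_def)
  then show "0 \<le> y k" "y k \<le> int n"
    using Delta_V_mono[OF assms(1), of 0 k] Delta_V_mono[OF assms(1), of k m] assms(2) by auto
qed

definition move_right :: "(nat \<Rightarrow> nat) \<Rightarrow> nat \<Rightarrow> nat \<Rightarrow> nat" where
  "move_right x u = x(u := x u - 1, Suc u := x (Suc u) + 1)"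

definition monomial_step :: "nat \<Rightarrow> (nat \<Rightarrow> nat) \<Rightarrow> (nat \<Rightarrow> nat) \<Rightarrow> bool" where
  "monomial_step m x y \<longleftrightarrow> (\<exists>u<m. 1 \<le> x u \<and> y = move_right x u)"

lemma rpow_E_path_iff_monomial_step:
  "rpow_E (path_V m) path_E x y \<longleftrightarrow> monomial_step m x y \<or> monomial_step m y x"
proof
  assume "rpow_E (path_V m) path_E x y"
  then obtain u v where uv: "u \<le> m" "v \<le> m" "path_E u v" "1 \<le> x u"
    and y: "y = x(u := x u - 1, v := x v + 1)"
    unfolding rpow_E_def path_V_def by auto
  show "monomial_step m x y \<or> monomial_step m y x"
  proof (cases "v = Suc u")
    case True
    then have "u < m" using uv(2) by simp
    then show ?thesis using uv(4) y True unfolding monomial_step_def move_right_def by blast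
  next
    case False
    then have "u = Suc v" using uv(3) by (simp add: path_E_def)
    then have "1 \<le> y v" "x = move_right y v"
      using uv(4) y by (auto simp: move_right_def fun_eq_iff)
    moreover have "v < m" using uv(1) \<open>u = Suc v\<close> by simp
    ultimately show ?thesis unfolding monomial_step_def by blast
  qed
next
  have step: "rpow_E (path_V m) path_E x (move_right x u)" if "u < m" "1 \<le> x u" for x u
    using that unfolding rpow_E_def path_V_def path_E_def move_right_def by force
  have unmove: "rpow_E (path_V m) path_E (move_right x u) x" if "u < m" "1 \<le> x u" for x u
  proof -
    have "x = (move_right x u)(Suc u := move_right x u (Suc u) - 1, u := move_right x u u + 1)"
      using that by (auto simp: move_right_def fun_eq_iff)
    then show ?thesis
      using that unfolding rpow_E_def path_V_def path_E_def
      by (intro bexI[of _ "Suc u"] bexI[of _ u]) (auto simp: move_right_def)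
  qed
  assume "monomial_step m x y \<or> monomial_step m y x"
  then show "rpow_E (path_V m) path_E x y"
    using step unmove unfolding monomial_step_def by blast
qed

lemma sum_move_token:
  assumes "finite R" "u \<noteq> v" "1 \<le> x u"
  shows "int (sum (x(u := x u - 1, v := x v + 1)) R) = int (sum x R) - of_bool (u \<in> R) + of_bool (v \<in> R)"
proof -
  have "int ((x(u := x u - 1, v := x v + 1)) i) = int (x i) - of_bool (i = u) + of_bool (i = v)" for i
    using assms by auto
  then have "int (sum (x(u := x u - 1, v := x v + 1)) R)
      = (\<Sum>i\<in>R. int (x i)) - (\<Sum>i\<in>R. of_bool (i = u)) + (\<Sum>i\<in>R. of_bool (i = v))"
    by (simp add: of_nat_sum sum.distrib sum_subtractf)
  also have "\<dots> = int (sum x R) - of_bool (u \<in> R) + of_bool (v \<in> R)"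
    using assms(1) by (simp add: sum.delta)
  finally show ?thesis .
qed

definition suffix_sum :: "nat \<Rightarrow> (nat \<Rightarrow> nat) \<Rightarrow> nat \<Rightarrow> nat" where
  "suffix_sum m x k = (\<Sum>i\<in>{m - k + 1..m}. x i)"

lemma suffix_sum_0 [simp]: "suffix_sum m x 0 = 0"
  by (simp add: suffix_sum_def)

lemma suffix_sum_Suc: "k < m \<Longrightarrow> suffix_sum m x (Suc k) = suffix_sum m x k + x (m - k)"
proof -
  assume "k < m"
  then have "{m - Suc k + 1..m} = insert (m - k) {m - k + 1..m}" by auto
  then show ?thesis unfolding suffix_sum_def by simp
qed

lemma suffix_sum_mono: "k \<le> k' \<Longrightarrow> suffix_sum m x k \<le> suffix_sum m x k'"
  unfolding suffix_sum_def by (rule sum_mono2) auto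

lemma phi_eq_suffix_sum: "k \<le> m \<Longrightarrow> phi m x k = int (suffix_sum m x k)"
  by (cases "k = 0") (simp_all add: phi_def suffix_sum_def)

lemma phi_outside: "k \<notin> {1..m} \<Longrightarrow> phi m x k = 0"
  by (simp add: phi_def del: atLeastAtMost_iff)

lemma rpow_V_path_iff:
  "x \<in> rpow_V (path_V m) n \<longleftrightarrow> (\<forall>v>m. x v = 0) \<and> x 0 + suffix_sum m x m = n"
proof -
  have "sum x {0..m} = x 0 + suffix_sum m x m"
    by (simp add: suffix_sum_def sum.atLeast_Suc_atMost)
  then show ?thesis by (auto simp: rpow_V_def path_V_def not_le)
qed

lemma move_right_in_rpow_V:
  assumes "x \<in> rpow_V (path_V m) n" "u < m" "1 \<le> x u"
  shows "move_right x u \<in> rpow_V (path_V m) n"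
proof -
  have "int (sum (move_right x u) {0..m}) = int (sum x {0..m})"
    unfolding move_right_def using assms(2,3) by (subst sum_move_token) auto
  then have "sum (move_right x u) {0..m} = sum x {0..m}"
    by (simp only: of_nat_eq_iff)
  moreover have "move_right x u v = 0" if "v \<notin> {0..m}" for v
    using assms that by (auto simp: rpow_V_def path_V_def move_right_def)
  ultimately show ?thesis using assms(1) by (simp add: rpow_V_def path_V_def)
qed

lemma phi_move_right:
  assumes "u < m" "1 \<le> x u"
  shows "phi m (move_right x u) = (phi m x)(m - u := phi m x (m - u) + 1)"
proof
  fix k
  show "phi m (move_right x u) k = ((phi m x)(m - u := phi m x (m - u) + 1)) k"
  proof (cases "k \<in> {1..m}")
    case True
    have "int (suffix_sum m (move_right x u) k) = int (suffix_sum m x k) + of_bool (k = m - u)"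
      unfolding suffix_sum_def move_right_def using assms True by (subst sum_move_token) auto
    then show ?thesis using True by (auto simp: phi_eq_suffix_sum)
  next
    case False
    then show ?thesis using assms by (auto simp: phi_outside)
  qed
qed

lemma phi_in_Delta_V:
  assumes "x \<in> rpow_V (path_V m) n"
  shows "phi m x \<in> Delta_V m n"
  unfolding Delta_V_iff Zm_V_def
proof (intro conjI allI impI CollectI)
  show "phi m x i = 0" if "i \<notin> {1..m}" for i using that by (rule phi_outside)
  show "phi m x k \<le> phi m x (Suc k)" if "k < m" for k
    using that by (simp add: phi_eq_suffix_sum suffix_sum_mono)
  show "phi m x m \<le> int n"
    using assms by (simp add: rpow_V_path_iff phi_eq_suffix_sum)
qed

lemma phi_inj_on: "inj_on (phi m) (rpow_V (path_V m) n)"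
proof (rule inj_onI)
  fix x y
  assume x: "x \<in> rpow_V (path_V m) n" and y: "y \<in> rpow_V (path_V m) n" and eq: "phi m x = phi m y"
  have sums: "suffix_sum m x k = suffix_sum m y k" if "k \<le> m" for k
    using eq that by (metis phi_eq_suffix_sum of_nat_eq_iff)
  show "x = y"
  proof
    fix j
    consider "j = 0" | "1 \<le> j" "j \<le> m" | "m < j" by linarith
    then show "x j = y j"
    proof cases
      case 1
      then show ?thesis using x y sums[of m] by (simp add: rpow_V_path_iff)
    next
      case 2
      then have "m - j < m" "m - (m - j) = j" by auto
      then show ?thesis
        using suffix_sum_Suc[of "m - j" m x] suffix_sum_Suc[of "m - j" m y]
          sums[of "m - j"] sums[of "Suc (m - j)"] by simp
    next
      case 3
      then show ?thesis using x y by (simp add: rpow_V_path_iff)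
    qed
  qed
qed

lemma Delta_V_subset_phi_image: "Delta_V m n \<subseteq> phi m ` rpow_V (path_V m) n"
proof
  fix y assume y: "y \<in> Delta_V m n"
  define x where "x j = (if j = 0 then nat (int n - y m)
      else if j \<le> m then nat (y (m - j + 1) - y (m - j)) else 0)" for j
  have sums: "int (suffix_sum m x k) = y k" if "k \<le> m" for k
    using that
  proof (induction k)
    case 0
    then show ?case using y by (simp add: Delta_V_def Zm_V_def)
  next
    case (Suc k)
    have "x (m - k) = nat (y (Suc k) - y k)" using Suc.prems by (simp add: x_def Suc_diff_Suc)
    moreover have "y k \<le> y (Suc k)" using y Suc.prems by (simp add: Delta_V_iff)
    ultimately show ?case using Suc suffix_sum_Suc[of k m x] by simp
  qed
  have "x \<in> rpow_V (path_V m) n"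
    using sums[of m] Delta_V_bounds[OF y, of m] by (auto simp: rpow_V_path_iff x_def)
  moreover have "phi m x = y"
  proof
    fix k
    show "phi m x k = y k"
      using y sums[of k]
      by (cases "k \<in> {1..m}") (auto simp: phi_outside phi_eq_suffix_sum Delta_V_def Zm_V_def)
  qed
  ultimately show "y \<in> phi m ` rpow_V (path_V m) n" by blast
qed

lemma bij_betw_phi: "bij_betw (phi m) (rpow_V (path_V m) n) (Delta_V m n)"
  unfolding bij_betw_def using phi_inj_on phi_in_Delta_V Delta_V_subset_phi_image by blast

lemma monomial_step_iff_unit_step:
  assumes x: "x \<in> rpow_V (path_V m) n" and y: "y \<in> rpow_V (path_V m) n"
  shows "monomial_step m x y \<longleftrightarrow> unit_step m (phi m x) (phi m y)"
proof
  assume "monomial_step m x y"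
  then obtain u where "u < m" "1 \<le> x u" "y = move_right x u"
    unfolding monomial_step_def by blast
  then show "unit_step m (phi m x) (phi m y)"
    unfolding unit_step_def by (intro bexI[of _ "m - u"]) (auto simp: phi_move_right)
next
  assume "unit_step m (phi m x) (phi m y)"
  then obtain k where k: "k \<in> {1..m}" and step: "phi m y = (phi m x)(k := phi m x k + 1)"
    unfolding unit_step_def by blast
  define u where "u = m - k"
  have u: "u < m" "m - u = k" using k by (auto simp: u_def)
  have step_k: "phi m y k = phi m x k + 1" using fun_cong[OF step, of k] by simp
  have "1 \<le> x u"
  proof (cases "k < m")
    case True
    have "phi m y (Suc k) = phi m x (Suc k)" using fun_cong[OF step, of "Suc k"] by simp
    moreover have "phi m y k \<le> phi m y (Suc k)"
      using phi_in_Delta_V[OF y] True by (simp add: Delta_V_iff)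
    ultimately show ?thesis
      using step_k True suffix_sum_Suc[OF True, of x] by (simp add: phi_eq_suffix_sum u_def)
  next
    case False
    then have "k = m" "u = 0" using k by (auto simp: u_def)
    moreover have "phi m y m \<le> int n" using phi_in_Delta_V[OF y] by (simp add: Delta_V_iff)
    ultimately show ?thesis using step_k x by (simp add: phi_eq_suffix_sum rpow_V_path_iff)
  qed
  then have "phi m (move_right x u) = phi m y" using step u phi_move_right by simp
  then have "move_right x u = y"
    using inj_onD[OF phi_inj_on] move_right_in_rpow_V[OF x u(1) \<open>1 \<le> x u\<close>] y by blast
  then show "monomial_step m x y" using u(1) \<open>1 \<le> x u\<close> unfolding monomial_step_def by blast
qed

lemma graph_iso_phi:
  "graph_iso (rpow_V (path_V m) n) (rpow_E (path_V m) path_E) (Delta_V m n) (Zm_E m) (phi m)"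
proof (rule graph_iso_of_steps[OF bij_betw_phi])
  show "Zm_E m a b \<longleftrightarrow> unit_step m a b \<or> unit_step m b a"
    if "a \<in> Delta_V m n" "b \<in> Delta_V m n" for a b
    using that by (intro Zm_E_iff_unit_step) (auto simp: Delta_V_def)
qed (simp_all add: rpow_E_path_iff_monomial_step monomial_step_iff_unit_step)

lemma token_shift_list_update_Suc:
  assumes "distinct xs" "distinct (xs[i := Suc (xs ! i)])" "i < length xs"
  shows "token_shift (set xs) (set (xs[i := Suc (xs ! i)]))"
proof -
  define u where "u = xs ! i"
  have "Suc u \<notin> set xs"
  proof
    assume "Suc u \<in> set xs"
    then obtain j where j: "j < length xs" "xs ! j = Suc u" by (auto simp: in_set_conv_nth)
    then have "j \<noteq> i" by (auto simp: u_def)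
    then have "xs[i := Suc u] ! j = xs[i := Suc u] ! i"
      using j assms(3) by simp
    then show False
      using \<open>j \<noteq> i\<close> j(1) assms(2,3) nth_eq_iff_index_eq[of "xs[i := Suc u]" j i]
      by (simp add: u_def)
  qed
  moreover have "set (xs[i := Suc u]) = insert (Suc u) (set xs - {u})"
    using set_update_distinct[OF assms(1,3)] by (simp add: u_def)
  ultimately show ?thesis
    using assms(3) unfolding token_shift_def u_def by auto
qed

definition token_list :: "nat \<Rightarrow> (nat \<Rightarrow> int) \<Rightarrow> nat list" where
  "token_list m y = map (\<lambda>j. nat (y (Suc j)) + j) [0..<m]"

definition token_set :: "nat \<Rightarrow> (nat \<Rightarrow> int) \<Rightarrow> nat set" where
  "token_set m y = set (token_list m y)"

lemma length_token_list [simp]: "length (token_list m y) = m"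
  by (simp add: token_list_def)

lemma nth_token_list: "j < m \<Longrightarrow> token_list m y ! j = nat (y (Suc j)) + j"
  by (simp add: token_list_def)

lemma sorted_token_list:
  assumes "y \<in> Delta_V m n"
  shows "sorted_wrt (<) (token_list m y)"
  unfolding sorted_wrt_iff_nth_less
proof (intro allI impI)
  fix i j assume "i < j" "j < length (token_list m y)"
  moreover from this have "y (Suc i) \<le> y (Suc j)" by (intro Delta_V_mono[OF assms]) auto
  ultimately show "token_list m y ! i < token_list m y ! j" by (simp add: nth_token_list)
qed

lemma distinct_token_list: "y \<in> Delta_V m n \<Longrightarrow> distinct (token_list m y)"
  using sorted_token_list strict_sorted_iff by blast

lemma token_list_unit_step:
  assumes "k \<in> {1..m}" "0 \<le> y k"
  shows "token_list m (y(k := y k + 1)) = (token_list m y)[k - 1 := Suc (token_list m y ! (k - 1))]"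
  using assms by (intro nth_equalityI) (auto simp: nth_token_list nth_list_update)

lemma token_set_in_token_V:
  assumes "y \<in> Delta_V m n"
  shows "token_set m y \<in> token_V (path_V (n + m - 1)) m"
proof -
  have "token_list m y ! j \<le> n + m - 1" if "j < m" for j
    using Delta_V_bounds[OF assms, of "Suc j"] that by (simp add: nth_token_list)
  then have "token_set m y \<subseteq> {0..n + m - 1}"
    by (auto simp: token_set_def in_set_conv_nth)
  moreover have "card (token_set m y) = m"
    using distinct_card[OF distinct_token_list[OF assms]] by (simp add: token_set_def)
  ultimately show ?thesis by (simp add: token_V_def path_V_def)
qed

lemma token_set_inj_on: "inj_on (token_set m) (Delta_V m n)"
proof (rule inj_onI)
  fix y y' assume y: "y \<in> Delta_V m n" and y': "y' \<in> Delta_V m n"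
    and eq: "token_set m y = token_set m y'"
  have lists: "token_list m y = token_list m y'"
    using strict_sorted_equal[OF sorted_token_list[OF y'] sorted_token_list[OF y]] eq
    by (simp add: token_set_def)
  show "y = y'"
  proof
    fix k
    show "y k = y' k"
    proof (cases "k \<in> {1..m}")
      case True
      then have "k - 1 < m" "Suc (k - 1) = k" by auto
      then have "nat (y k) + (k - 1) = nat (y' k) + (k - 1)"
        using arg_cong[OF lists, of "\<lambda>xs. xs ! (k - 1)"] by (metis nth_token_list)
      then have "nat (y k) = nat (y' k)" by simp
      moreover have "0 \<le> y k" "0 \<le> y' k" using True Delta_V_bounds y y' by auto
      ultimately show ?thesis by simp
    next
      case False
      then show ?thesis using y y' by (simp add: Delta_V_def Zm_V_def)
    qed
  qed
qed

lemma token_V_subset_token_set_image: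
  "token_V (path_V (n + m - 1)) m \<subseteq> token_set m ` Delta_V m n"
proof
  fix A assume "A \<in> token_V (path_V (n + m - 1)) m"
  then have A: "A \<subseteq> {0..n + m - 1}" "card A = m" "finite A"
    by (auto simp: token_V_def path_V_def intro: finite_subset)
  define xs where "xs = sorted_list_of_set A"
  have xs: "sorted_wrt (<) xs" "set xs = A" "length xs = m"
    using A by (simp_all add: xs_def)
  define y where "y k = (if k \<in> {1..m} then int (xs ! (k - 1)) - int (k - 1) else 0)" for k
  have "y \<in> Delta_V m n"
    unfolding Delta_V_iff Zm_V_def
  proof (intro conjI allI impI CollectI)
    show "y i = 0" if "i \<notin> {1..m}" for i using that by (simp add: y_def del: atLeastAtMost_iff)
    show "y k \<le> y (Suc k)" if "k < m" for k
      using that sorted_wrt_nth_less[OF xs(1), of "k - 1" k] xs(3) by (cases k) (auto simp: y_def)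
    show "y m \<le> int n"
    proof (cases m)
      case (Suc j)
      then have "xs ! j \<in> A" using xs by auto
      then show ?thesis using A(1) Suc by (auto simp: y_def)
    qed (simp add: y_def)
  qed
  moreover have "token_list m y = xs"
  proof (rule nth_equalityI)
    fix j assume "j < length (token_list m y)"
    moreover from this have "0 \<le> y (Suc j)" using Delta_V_bounds[OF \<open>y \<in> Delta_V m n\<close>] by simp
    ultimately show "token_list m y ! j = xs ! j" by (simp add: nth_token_list y_def)
  qed (simp add: xs)
  ultimately show "A \<in> token_set m ` Delta_V m n"
    using xs(2) unfolding token_set_def by blast
qed

lemma bij_betw_token_set: "bij_betw (token_set m) (Delta_V m n) (token_V (path_V (n + m - 1)) m)"
  unfolding bij_betw_def
  using token_set_inj_on token_set_in_token_V token_V_subset_token_set_image by blast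

lemma unit_step_iff_token_shift:
  assumes y: "y \<in> Delta_V m n" and y': "y' \<in> Delta_V m n"
  shows "unit_step m y y' \<longleftrightarrow> token_shift (token_set m y) (token_set m y')"
proof
  assume "unit_step m y y'"
  then obtain k where k: "k \<in> {1..m}" and y'_eq: "y' = y(k := y k + 1)"
    unfolding unit_step_def by blast
  have "0 \<le> y k" using Delta_V_bounds[OF y] k by simp
  then have "token_list m y' = (token_list m y)[k - 1 := Suc (token_list m y ! (k - 1))]"
    using token_list_unit_step[OF k] y'_eq by simp
  moreover have "k - 1 < m" using k by auto
  ultimately show "token_shift (token_set m y) (token_set m y')"
    using token_shift_list_update_Suc[OF distinct_token_list[OF y], of "k - 1"]
      distinct_token_list[OF y'] by (simp add: token_set_def)
next
  assume "token_shift (token_set m y) (token_set m y')"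
  then obtain u where u: "u \<in> token_set m y" "Suc u \<notin> token_set m y"
    and y'_tokens: "token_set m y' = insert (Suc u) (token_set m y - {u})"
    unfolding token_shift_def by blast
  obtain j where j: "j < m" "token_list m y ! j = u"
    using u(1) by (auto simp: token_set_def in_set_conv_nth)
  define k where "k = Suc j"
  have k: "k \<in> {1..m}" "k - 1 = j" using j(1) by (auto simp: k_def)
  have u_eq: "u = nat (y k) + j" using j by (simp add: nth_token_list k_def)
  have yk: "0 \<le> y k" using Delta_V_bounds[OF y] k by simp
  define z where "z = y(k := y k + 1)"
  have "z \<in> Delta_V m n"
    unfolding Delta_V_iff
  proof (intro conjI allI impI)
    show "z \<in> Zm_V m" using y k by (auto simp: z_def Delta_V_def Zm_V_def)
    show "z i \<le> z (Suc i)" if "i < m" for i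
    proof (cases "i = k")
      case True
      have "token_list m y ! j < token_list m y ! k"
        using sorted_wrt_nth_less[OF sorted_token_list[OF y], of j k] that True by (simp add: k_def)
      moreover have "token_list m y ! k \<noteq> Suc u"
        using u(2) that True by (metis length_token_list nth_mem token_set_def)
      ultimately show ?thesis
        using that True j u_eq yk Delta_V_bounds[OF y, of "Suc k"]
        by (simp add: z_def nth_token_list k_def)
    next
      case False
      then show ?thesis
        using y that Delta_V_mono[OF y, of i k] by (auto simp: z_def Delta_V_iff)
    qed
    show "z m \<le> int n"
    proof (cases "k = m")
      case True
      have "Suc u \<in> token_set m y'" using y'_tokens by simp
      then have "Suc u \<le> n + m - 1"
        using token_set_in_token_V[OF y'] by (auto simp: token_V_def path_V_def)
      then show ?thesis using True u_eq k yk by (simp add: z_def)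
    next
      case False
      then show ?thesis using y by (simp add: z_def Delta_V_iff)
    qed
  qed
  moreover have "token_set m z = token_set m y'"
    using token_list_unit_step[of k m y, OF k(1) yk] set_update_distinct[OF distinct_token_list[OF y], of j]
      j k y'_tokens by (simp add: z_def token_set_def)
  ultimately have "z = y'" using inj_onD[OF token_set_inj_on] y' by blast
  then show "unit_step m y y'" using k(1) unfolding unit_step_def z_def by blast
qed

lemma graph_iso_token_set:
  "graph_iso (Delta_V m n) (Zm_E m) (token_V (path_V (n + m - 1)) m) (token_E path_E) (token_set m)"
proof (rule graph_iso_of_steps[OF bij_betw_token_set])
  show "Zm_E m a b \<longleftrightarrow> unit_step m a b \<or> unit_step m b a"
    if "a \<in> Delta_V m n" "b \<in> Delta_V m n" for a b
    using that by (intro Zm_E_iff_unit_step) (auto simp: Delta_V_def)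
  show "token_E path_E A B \<longleftrightarrow> token_shift A B \<or> token_shift B A"
    if "A \<in> token_V (path_V (n + m - 1)) m" "B \<in> token_V (path_V (n + m - 1)) m" for A B
    using that by (intro token_E_path_iff_token_shift)
      (auto simp: token_V_def path_V_def intro: finite_subset)
qed (rule unit_step_iff_token_shift)

theorem mainTheorem9:
  fixes m n :: nat
  assumes "m \<ge> 1" and "n \<ge> 1"
  shows "graph_iso (rpow_V (path_V m) n) (rpow_E (path_V m) path_E)
                   (Delta_V m n) (Zm_E m) (phi m)
       \<and> (\<exists>f :: (nat \<Rightarrow> nat) \<Rightarrow> nat set.
            graph_iso (rpow_V (path_V m) n) (rpow_E (path_V m) path_E)
                      (token_V (path_V (n + m - 1)) m) (token_E path_E) f)"
  using graph_iso_phi graph_iso_comp[OF graph_iso_phi graph_iso_token_set] by blast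

end
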